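(* Let $\mathcal M$ be the class of multilayer networks with $d$ aspects having a common vertex set $L_0$ and common elementary-layer sets $L_1,\dots,L_d$, and let $p\subseteq\{0,\dots,d\}$ be nonempty. Then for all $M,M'\in\mathcal M$, $$\mathrm{Iso}_p(M,M')=\{\boldsymbol\zeta\in P_p : g_p^M(\boldsymbol\zeta)\in\mathrm{Iso}(f_p(M),f_p(M'))\}.$$
   Context: A multilayer network with $d$ aspects is $M=(V_M,E_M,V,\mathbf L)$ with $\mathbf L=(L_1,\dots,L_d)$, $V_M\subseteq V\times L_1\times\dots\times L_d$, $E_M\subseteq V_M\times V_M$; write $L_0=V$ and $\mathbf v=(v_0,\dots,v_d)$. It is assumed that the sets $L_0,\dots,L_d$ are pairwise disjoint and that no tuple in $L_0\times\dots\times L_d$ belongs to any $L_a$. For nonempty $p\subseteq\{0,\dots,d\}$, $P_p=D_0\times\dots\times D_d$ with $D_a=S_{L_a}$ (symmetric group) if $a\in p$ and $D_a=\{1_{L_a}\}$ otherwise. For $\boldsymbol\zeta\in P_p$, $\mathbf v^{\boldsymbol\zeta}=(\zeta_0(v_0),\dots,\zeta_d(v_d))$ and $M^{\boldsymbol\zeta}=(\{\mathbf v^{\boldsymbol\zeta}:\mathbf v\in V_M\},\{(\mathbf v^{\boldsymbol\zeta},\mathbf u^{\boldsymbol\zeta}):(\mathbf v,\mathbf u)\in E_M\},V,\mathbf L)$; $\mathrm{Iso}_p(M,M')=\{\boldsymbol\zeta\in P_p:M^{\boldsymbol\zeta}=M'\}$. A vertex-colored graph is $G=(V_c,E_c,\pi,C)$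 with $E_c\subseteq V_c\times V_c$ and $\pi:V_c\to C$. For a bijection $\gamma:V_c\to V_c'$, $G^\gamma=(\gamma(V_c),\{(\gamma(v),\gamma(u)):(v,u)\in E_c\},\pi\circ\gamma^{-1},C)$, and $\mathrm{Iso}(G,G')$ is the set of bijections $\gamma$ from the vertex set of $G$ to that of $G'$ with $G^\gamma=G'$. Let $\overline p=\{0,\dots,d\}\setminus p=\{\overline p_1<\dots<\overline p_m\}$. Define $f_p(M)=(V_G,E_G,\pi,C)$ by: $V_G=V_M\cup\bigcup_{a\in p}L_a$; $E_G=E_M\cup\{(v_a,\mathbf v):\mathbf v\in V_M,\ a\in p\}$; $C=p\cup(L_{\overline p_1}\times\dots\times L_{\overline p_m})$; $\pi(x)=a$ if $x\in L_a$ with $a\in p$, and $\pi(\mathbf v)=(v_{\overline p_1},\dots,v_{\overline p_m})$ if $\mathbf v\in V_M$. For $\boldsymbol\zeta\in P_p$, let $g_p^M(\boldsymbol\zeta)$ be the bijection from $V_G$ (the vertex set of $f_p(M)$) to the vertex set of $f_p(M^{\boldsymbol\zeta})$ given by $\mathbf v\mapsto\mathbf v^{\boldsymbol\zeta}$ for $\mathbf v\in V_M$ and $x\mapsto\zeta_a(x)$ for $x\in L_a$, $a\in p$. *)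

theory Defs
  imports "HOL-Combinatorics.Permutations" "HOL-Library.FuncSet"
begin

(* All elementary layers (including the vertex set L_0) live in one type 'a,
   given by L :: nat => 'a set (L 0 = V, L 1, ..., L d).
   A tuple of permutations zeta = (zeta_0,...,zeta_d) is a function nat => ('a => 'a);
   a permutation of L_a is a function permuting L_a (identity outside L_a);
   indices > d are normalised to id. *)

type_synonym 'a mlnet = "'a list set \<times> ('a list \<times> 'a list) set"

definition tuples :: "nat \<Rightarrow> (nat \<Rightarrow> 'a set) \<Rightarrow> 'a list set" where
  "tuples d L = {v. length v = Suc d \<and> (\<forall>a\<le>d. v ! a \<in> L a)}"

definition is_mlnet :: "nat \<Rightarrow> (nat \<Rightarrow> 'a set) \<Rightarrow> 'a mlnet \<Rightarrow> bool" where
  "is_mlnet d L M \<longleftrightarrow> fst M \<subseteq> tuples d L \<and> snd M \<subseteq> fst M \<times> fst M"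

definition Pp :: "nat \<Rightarrow> (nat \<Rightarrow> 'a set) \<Rightarrow> nat set \<Rightarrow> (nat \<Rightarrow> 'a \<Rightarrow> 'a) set" where
  "Pp d L p = {\<zeta>. (\<forall>a\<le>d. if a \<in> p then \<zeta> a permutes L a else \<zeta> a = id)
                 \<and> (\<forall>a>d. \<zeta> a = id)}"

definition tup_act :: "(nat \<Rightarrow> 'a \<Rightarrow> 'a) \<Rightarrow> 'a list \<Rightarrow> 'a list" where
  "tup_act \<zeta> v = map (\<lambda>a. \<zeta> a (v ! a)) [0..<length v]"

definition net_act :: "(nat \<Rightarrow> 'a \<Rightarrow> 'a) \<Rightarrow> 'a mlnet \<Rightarrow> 'a mlnet" where
  "net_act \<zeta> M = (tup_act \<zeta> ` fst M,
                   (\<lambda>(v, u). (tup_act \<zeta> v, tup_act \<zeta> u)) ` snd M)"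

definition Iso_p :: "nat \<Rightarrow> (nat \<Rightarrow> 'a set) \<Rightarrow> nat set \<Rightarrow> 'a mlnet \<Rightarrow> 'a mlnet
                      \<Rightarrow> (nat \<Rightarrow> 'a \<Rightarrow> 'a) set" where
  "Iso_p d L p M M' = {\<zeta> \<in> Pp d L p. net_act \<zeta> M = M'}"

(* Vertex-colored graphs (V_c, E_c, pi, C); the colouring pi is kept extensional
   (undefined outside V_c) so that equality of graphs is meaningful. *)
type_synonym ('v, 'c) cgraph = "'v set \<times> ('v \<times> 'v) set \<times> ('v \<Rightarrow> 'c) \<times> 'c set"

definition cg_act :: "('v \<Rightarrow> 'w) \<Rightarrow> ('v, 'c) cgraph \<Rightarrow> ('w, 'c) cgraph" where
  "cg_act \<gamma> G = (case G of (V, E, \<pi>, C) \<Rightarrow>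
     (\<gamma> ` V, (\<lambda>(v, u). (\<gamma> v, \<gamma> u)) ` E, restrict (\<pi> \<circ> inv_into V \<gamma>) (\<gamma> ` V), C))"

definition cg_iso :: "('v, 'c) cgraph \<Rightarrow> ('w, 'c) cgraph \<Rightarrow> ('v \<Rightarrow> 'w) set" where
  "cg_iso G G' = {\<gamma>. bij_betw \<gamma> (fst G) (fst G') \<and> cg_act \<gamma> G = G'}"

definition pbar :: "nat \<Rightarrow> nat set \<Rightarrow> nat list" where
  "pbar d p = filter (\<lambda>a. a \<notin> p) [0..<Suc d]"

(* V_G = V_M \<union> \<Union>_{a\<in>p} L_a, realised as a disjoint union via the sum type
   (the paper assumes tuples are not elements of any L_a). Colours:
   C = p \<union> (L_{pbar_1} x ... x L_{pbar_m}), again as a sum type. *)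
definition fp_V :: "nat \<Rightarrow> (nat \<Rightarrow> 'a set) \<Rightarrow> nat set \<Rightarrow> 'a mlnet \<Rightarrow> ('a list + 'a) set" where
  "fp_V d L p M = Inl ` fst M \<union> Inr ` (\<Union>a\<in>p. L a)"

definition fp :: "nat \<Rightarrow> (nat \<Rightarrow> 'a set) \<Rightarrow> nat set \<Rightarrow> 'a mlnet
                    \<Rightarrow> ('a list + 'a, nat + 'a list) cgraph" where
  "fp d L p M =
     (fp_V d L p M,
      {(Inl v, Inl u) | v u. (v, u) \<in> snd M} \<union> {(Inr (v ! a), Inl v) | v a. v \<in> fst M \<and> a \<in> p},
      restrict (\<lambda>x. case x of
                  Inl v \<Rightarrow> Inr (map (\<lambda>a. v ! a) (pbar d p))
                | Inr y \<Rightarrow> Inl (THE a. a \<in> p \<and> y \<in> L a)) (fp_V d L p M),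
      Inl ` p \<union> Inr ` {w. length w = length (pbar d p) \<and>
                         (\<forall>i<length (pbar d p). w ! i \<in> L (pbar d p ! i))})"

definition gp :: "nat \<Rightarrow> (nat \<Rightarrow> 'a set) \<Rightarrow> nat set \<Rightarrow> (nat \<Rightarrow> 'a \<Rightarrow> 'a)
                    \<Rightarrow> ('a list + 'a) \<Rightarrow> ('a list + 'a)" where
  "gp d L p \<zeta> x = (case x of
       Inl v \<Rightarrow> Inl (tup_act \<zeta> v)
     | Inr y \<Rightarrow> Inr (\<zeta> (THE a. a \<in> p \<and> y \<in> L a) y))"

end

theory Submission
  imports Defs
begin

text \<open>The encoding f_p is equivariant: relabelling M by \<zeta> and then encoding gives the same
coloured graph as encoding M and then relabelling its vertices by g_p(\<zeta>). The colours of
tuple vertices only record the coordinates outside p, which \<zeta> fixes, and each layer vertex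
keeps the colour of its layer because \<zeta> permutes every layer within itself. Since f_p is
moreover injective (a network is recovered from the tuple part of its graph), M^\<zeta> = M' holds
exactly when g_p(\<zeta>) maps f_p(M) onto f_p(M'), and such a g_p(\<zeta>) is automatically a bijection
of the vertex sets.\<close>

lemma tup_act_nth: "i < length v \<Longrightarrow> tup_act \<zeta> v ! i = \<zeta> i (v ! i)"
  by (simp add: tup_act_def)

lemma length_tup_act [simp]: "length (tup_act \<zeta> v) = length v"
  by (simp add: tup_act_def)

lemma inj_tup_act:
  assumes "\<And>i. inj (\<zeta> i)"
  shows "inj (tup_act \<zeta>)"
proof (rule injI)
  fix v u assume eq: "tup_act \<zeta> v = tup_act \<zeta> u"
  then have len: "length v = length u" by (metis length_tup_act)
  show "v = u"
  proof (rule nth_equalityI)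
    fix i assume "i < length v"
    then have "\<zeta> i (v ! i) = \<zeta> i (u ! i)" using eq len by (metis tup_act_nth)
    then show "v ! i = u ! i" using assms by (meson injD)
  qed (fact len)
qed

lemma Pp_permutes: "\<zeta> \<in> Pp d L p \<Longrightarrow> a \<in> p \<Longrightarrow> \<zeta> a permutes L a"
  unfolding Pp_def by (cases "a \<le> d") (auto simp: permutes_id)

lemma Pp_id: "\<zeta> \<in> Pp d L p \<Longrightarrow> a \<notin> p \<Longrightarrow> \<zeta> a = id"
  unfolding Pp_def by (cases "a \<le> d") auto

lemma inj_Pp: "\<zeta> \<in> Pp d L p \<Longrightarrow> inj (\<zeta> a)"
  by (cases "a \<in> p") (auto dest: Pp_permutes Pp_id permutes_inj)

lemma restrict_comp_inv_into:
  assumes "inj_on g V" and "\<And>x. x \<in> V \<Longrightarrow> c (g x) = c x"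
  shows "restrict (restrict c V \<circ> inv_into V g) (g ` V) = restrict c (g ` V)"
  using assms by (auto simp: fun_eq_iff)

definition fp_E :: "nat set \<Rightarrow> 'a mlnet \<Rightarrow> ('a list + 'a) rel" where
  "fp_E p M = {(Inl v, Inl u) | v u. (v, u) \<in> snd M} \<union> {(Inr (v ! a), Inl v) | v a. v \<in> fst M \<and> a \<in> p}"

definition fp_colour :: "nat \<Rightarrow> (nat \<Rightarrow> 'a set) \<Rightarrow> nat set \<Rightarrow> 'a list + 'a \<Rightarrow> nat + 'a list" where
  "fp_colour d L p x = (case x of
       Inl v \<Rightarrow> Inr (map (\<lambda>a. v ! a) (pbar d p))
     | Inr y \<Rightarrow> Inl (THE a. a \<in> p \<and> y \<in> L a))"

definition fp_colours :: "nat \<Rightarrow> (nat \<Rightarrow> 'a set) \<Rightarrow> nat set \<Rightarrow> (nat + 'a list) set" where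
  "fp_colours d L p = Inl ` p \<union> Inr ` {w. length w = length (pbar d p) \<and>
                         (\<forall>i<length (pbar d p). w ! i \<in> L (pbar d p ! i))}"

lemma fp_components:
  "fp d L p M = (fp_V d L p M, fp_E p M, restrict (fp_colour d L p) (fp_V d L p M), fp_colours d L p)"
  unfolding fp_def fp_E_def fp_colour_def fp_colours_def ..

lemma Inl_Inl_in_fp_E: "(Inl v, Inl u) \<in> fp_E p M \<longleftrightarrow> (v, u) \<in> snd M"
  by (auto simp: fp_E_def)

lemma fp_inject: "fp d L p M = fp d L p N \<Longrightarrow> M = N"
proof -
  assume eq: "fp d L p M = fp d L p N"
  have "Inl ` fst M \<union> Inr ` (\<Union>a\<in>p. L a) = Inl ` fst N \<union> Inr ` (\<Union>a\<in>p. L a)"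
    using eq by (simp add: fp_components fp_V_def)
  then have "fst M = fst N" by blast
  moreover have "fp_E p M = fp_E p N"
    using eq by (simp add: fp_components)
  then have "snd M = snd N"
    by (metis Inl_Inl_in_fp_E subrelI subset_antisym)
  ultimately show "M = N" by (simp add: prod_eq_iff)
qed

context
  fixes d :: nat and L :: "nat \<Rightarrow> 'a set" and p :: "nat set" and \<zeta> :: "nat \<Rightarrow> 'a \<Rightarrow> 'a"
  assumes disj: "\<And>a b. a \<le> d \<Longrightarrow> b \<le> d \<Longrightarrow> a \<noteq> b \<Longrightarrow> L a \<inter> L b = {}"
    and p_sub: "p \<subseteq> {0..d}"
    and \<zeta>: "\<zeta> \<in> Pp d L p"
begin

lemma layer_index_eq: "a \<in> p \<Longrightarrow> y \<in> L a \<Longrightarrow> (THE b. b \<in> p \<and> y \<in> L b) = a"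
proof (rule the_equality)
  fix b assume "a \<in> p" "y \<in> L a" "b \<in> p \<and> y \<in> L b"
  then show "b = a" using disj[of a b] p_sub by (metis IntI atLeastAtMost_iff empty_iff subsetD)
qed simp

lemma layer_action_mem: "a \<in> p \<Longrightarrow> y \<in> L a \<Longrightarrow> \<zeta> a y \<in> L a"
  using Pp_permutes[OF \<zeta>] by (simp add: permutes_in_image)

lemma gp_Inl [simp]: "gp d L p \<zeta> (Inl v) = Inl (tup_act \<zeta> v)"
  by (simp add: gp_def)

lemma gp_Inr: "a \<in> p \<Longrightarrow> y \<in> L a \<Longrightarrow> gp d L p \<zeta> (Inr y) = Inr (\<zeta> a y)"
  by (simp add: gp_def layer_index_eq)

lemma inj_on_gp: "inj_on (gp d L p \<zeta>) (fp_V d L p M)"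
proof (rule inj_onI)
  fix x y assume x: "x \<in> fp_V d L p M" and y: "y \<in> fp_V d L p M"
    and eq: "gp d L p \<zeta> x = gp d L p \<zeta> y"
  show "x = y"
  proof (cases x)
    case (Inl v)
    with x y eq obtain u where "y = Inl u" by (auto simp: fp_V_def gp_Inr)
    moreover have "inj (tup_act \<zeta>)" by (rule inj_tup_act) (rule inj_Pp[OF \<zeta>])
    ultimately show ?thesis using Inl eq by (auto dest: injD)
  next
    case (Inr s)
    with x obtain a where a: "a \<in> p" "s \<in> L a" by (auto simp: fp_V_def)
    with Inr y eq obtain t b where t: "y = Inr t" "b \<in> p" "t \<in> L b"
      by (auto simp: fp_V_def gp_Inr)
    have same: "\<zeta> a s = \<zeta> b t" using eq Inr a t by (simp add: gp_Inr)
    then have "a = b"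
      using disj[of a b] p_sub a t layer_action_mem by (metis IntI atLeastAtMost_iff empty_iff subsetD)
    with same Inr t show ?thesis using inj_Pp[OF \<zeta>, of a] by (auto dest: injD)
  qed
qed

lemma gp_image_layers: "gp d L p \<zeta> ` Inr ` (\<Union>a\<in>p. L a) = Inr ` (\<Union>a\<in>p. L a)"
proof -
  have "gp d L p \<zeta> ` Inr ` L a = Inr ` L a" if "a \<in> p" for a
  proof -
    have "gp d L p \<zeta> ` Inr ` L a = Inr ` \<zeta> a ` L a"
      using that by (force simp: gp_Inr image_image)
    then show ?thesis using permutes_image[OF Pp_permutes[OF \<zeta> that]] by simp
  qed
  then show ?thesis by (simp add: image_UN)
qed

lemma gp_image_fp_V: "gp d L p \<zeta> ` fp_V d L p M = fp_V d L p (net_act \<zeta> M)"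
  unfolding fp_V_def net_act_def image_Un gp_image_layers by (simp add: image_image)

lemma gp_image_fp_E:
  assumes M: "is_mlnet d L M"
  shows "(\<lambda>(x, y). (gp d L p \<zeta> x, gp d L p \<zeta> y)) ` fp_E p M = fp_E p (net_act \<zeta> M)"
proof -
  have layer: "v ! a \<in> L a" and idx: "a < length v" if "v \<in> fst M" "a \<in> p" for v a
  proof -
    have "v \<in> tuples d L" "a \<le> d" using M that p_sub by (auto simp: is_mlnet_def)
    then show "v ! a \<in> L a" "a < length v" by (auto simp: tuples_def)
  qed
  have incidence: "(gp d L p \<zeta> (Inr (v ! a)), gp d L p \<zeta> (Inl v))
      = (Inr (tup_act \<zeta> v ! a), Inl (tup_act \<zeta> v))" if "v \<in> fst M" "a \<in> p" for v a
    using that by (simp add: gp_Inr[OF _ layer] tup_act_nth[OF idx])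
  show ?thesis
    unfolding fp_E_def image_Un
  proof (intro arg_cong2[where f = "(\<union>)"])
    show "(\<lambda>(x, y). (gp d L p \<zeta> x, gp d L p \<zeta> y)) ` {(Inl v, Inl u) | v u. (v, u) \<in> snd M}
        = {(Inl v, Inl u) | v u. (v, u) \<in> snd (net_act \<zeta> M)}"
      by (auto simp: net_act_def image_iff) force+
    show "(\<lambda>(x, y). (gp d L p \<zeta> x, gp d L p \<zeta> y)) ` {(Inr (v ! a), Inl v) | v a. v \<in> fst M \<and> a \<in> p}
        = {(Inr (v ! a), Inl v) | v a. v \<in> fst (net_act \<zeta> M) \<and> a \<in> p}"
      using incidence by (auto simp: net_act_def image_iff) (metis gp_Inl)+
  qed
qed

lemma fp_colour_gp:
  assumes M: "is_mlnet d L M" and x: "x \<in> fp_V d L p M"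
  shows "fp_colour d L p (gp d L p \<zeta> x) = fp_colour d L p x"
proof (cases x)
  case (Inl v)
  with x M have len: "length v = Suc d" by (auto simp: fp_V_def is_mlnet_def tuples_def)
  have "tup_act \<zeta> v ! a = v ! a" if "a \<in> set (pbar d p)" for a
    using that len Pp_id[OF \<zeta>] by (simp add: pbar_def tup_act_nth del: upt_Suc)
  with Inl show ?thesis by (simp add: fp_colour_def)
next
  case (Inr y)
  with x obtain a where "a \<in> p" "y \<in> L a" by (auto simp: fp_V_def)
  with Inr show ?thesis by (simp add: fp_colour_def gp_Inr layer_index_eq layer_action_mem)
qed

theorem cg_act_gp_fp:
  assumes "is_mlnet d L M"
  shows "cg_act (gp d L p \<zeta>) (fp d L p M) = fp d L p (net_act \<zeta> M)"
proof -
  have "restrict (restrict (fp_colour d L p) (fp_V d L p M) \<circ> inv_into (fp_V d L p M) (gp d L p \<zeta>))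
      (gp d L p \<zeta> ` fp_V d L p M) = restrict (fp_colour d L p) (gp d L p \<zeta> ` fp_V d L p M)"
    by (rule restrict_comp_inv_into[OF inj_on_gp]) (rule fp_colour_gp[OF assms])
  then show ?thesis
    using assms by (simp add: cg_act_def fp_components gp_image_fp_E gp_image_fp_V)
qed

lemma gp_in_cg_iso_iff:
  assumes "is_mlnet d L M"
  shows "gp d L p \<zeta> \<in> cg_iso (fp d L p M) (fp d L p M') \<longleftrightarrow> net_act \<zeta> M = M'"
proof -
  have "bij_betw (gp d L p \<zeta>) (fp_V d L p M) (fp_V d L p (net_act \<zeta> M))"
    by (simp add: bij_betw_def inj_on_gp gp_image_fp_V)
  then show ?thesis
    using fp_inject[of d L p "net_act \<zeta> M" M'] cg_act_gp_fp[OF assms]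
    by (auto simp: cg_iso_def fp_components)
qed

end

theorem theorem1:
  fixes d :: nat and L :: "nat \<Rightarrow> 'a set" and p :: "nat set"
    and M M' :: "'a mlnet"
  assumes disj: "\<And>a b. a \<le> d \<Longrightarrow> b \<le> d \<Longrightarrow> a \<noteq> b \<Longrightarrow> L a \<inter> L b = {}"
    and p_sub: "p \<subseteq> {0..d}" and p_ne: "p \<noteq> {}"
    and M: "is_mlnet d L M" and M': "is_mlnet d L M'"
  shows "Iso_p d L p M M' =
           {\<zeta> \<in> Pp d L p. gp d L p \<zeta> \<in> cg_iso (fp d L p M) (fp d L p M')}"
  unfolding Iso_p_def using gp_in_cg_iso_iff[OF disj p_sub _ M] by blast

end
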